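(* Let $P_m(z)=\sum_{j=0}^m \frac{(2m-j)!}{j!(m-j)!}z^j$ and $R_m(z)=P_m(z)/P_m(-z)$. (i) Let $m\ge3$ and let $\pm\mathrm{i}r$ ($r\in\mathbb{R}\setminus\{0\}$) be a pair of nonzero zeros of $P_m(z)-P_m(-z)$. For $t\in\mathbb{C}$ with $|t|$ small let $\hat z_{+}(t)$ and $\hat z_{-}(t)$ be the unique solutions of $R_m(z)=e^t$ near $\mathrm{i}r$ and near $-\mathrm{i}r$, respectively. Then, as $|t|\to0$, $$R_m'(\hat z_{+}(t))-R_m'(\hat z_{-}(t))=\mathcal{O}(t)\quad\text{and}\quad R_m'(\hat z_{+}(t))=\mathcal{O}(1).$$ (ii) The same holds for $m\ge2$ when $\pm\mathrm{i}r$ is a pair of zeros of $P_m(z)+P_m(-z)$ and $\hat z_\pm(t)$ are the unique solutions of $R_m(z)=-e^t$ near $\pm\mathrm{i}r$.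
   Context: $R_m$ is the stability function of the $m$-stage Gauss Runge–Kutta method (the $(m,m)$-Padé approximant of $e^z$). The zeros of $P_m(z)\mp P_m(-z)$ lie on the imaginary axis and, for small $|t|$, near each nonzero such zero there is exactly one solution of $R_m(z)=\pm e^t$, depending analytically on $t$. *)

theory Defs
  imports "HOL-Analysis.Analysis" "HOL-Library.Landau_Symbols"
begin

definition Pm :: "nat \<Rightarrow> complex \<Rightarrow> complex" where
  "Pm m z = (\<Sum>j=0..m. of_real (fact (2*m - j) / (fact j * fact (m - j))) * z ^ j)"

definition Rm :: "nat \<Rightarrow> complex \<Rightarrow> complex" where
  "Rm m z = Pm m z / Pm m (- z)"

definition local_sol_branch :: "nat \<Rightarrow> complex \<Rightarrow> complex \<Rightarrow> (complex \<Rightarrow> complex) \<Rightarrow> bool" where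
  "local_sol_branch m s c zf \<longleftrightarrow>
     (\<exists>\<delta>>0. \<exists>\<epsilon>>0. \<forall>t. norm t < \<delta> \<longrightarrow>
        zf t \<in> ball c \<epsilon> \<and> Rm m (zf t) = s * exp t \<and>
        (\<forall>z\<in>ball c \<epsilon>. Rm m z = s * exp t \<longrightarrow> z = zf t))"

end

theory Submission
  imports Defs "HOL-Complex_Analysis.Complex_Analysis"
begin

(* Since Rm m (- z) = 1 / Rm m z and s\<^sup>2 = 1, the map t \<mapsto> - z\<^sub>+(- t) is a solution branch of
   Rm m z = s e\<^sup>t near - i r, so by uniqueness z\<^sub>-(0) = - z\<^sub>+(0); differentiating the symmetry
   gives R'(- w) = R'(w) / R(w)\<^sup>2, hence R'(z\<^sub>-(0)) = R'(z\<^sub>+(0)).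
   Each branch is holomorphic in t near 0: it is the local inverse of z \<mapsto> Ln (Rm m z / s),
   which is injective near z(0) precisely because the solution is unique there.
   Thus t \<mapsto> R'(z\<^sub>+ t) - R'(z\<^sub>- t) is holomorphic and vanishes at 0, which gives O(t),
   and R'(z\<^sub>+ t) is continuous at 0, which gives O(1). *)

lemma Pm_holomorphic: "Pm m holomorphic_on S"
  unfolding Pm_def by (intro holomorphic_intros)

lemma open_Pm_minus_nonzero: "open {z. Pm m (- z) \<noteq> 0}"
  by (intro open_Collect_neq continuous_on_compose2[OF holomorphic_on_imp_continuous_on[OF Pm_holomorphic]]
      continuous_intros) auto

lemma Rm_holomorphic: "Rm m holomorphic_on {z. Pm m (- z) \<noteq> 0}"
proof -
  have "(\<lambda>z. Pm m (- z)) holomorphic_on UNIV"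
    by (intro holomorphic_on_compose_gen[OF _ Pm_holomorphic, unfolded o_def] holomorphic_intros) auto
  then show ?thesis
    unfolding Rm_def[abs_def] by (intro holomorphic_intros Pm_holomorphic) (auto intro: holomorphic_on_subset)
qed

(* Holds also where Pm vanishes, since x / 0 = 0. *)
lemma Rm_minus: "Rm m (- z) = inverse (Rm m z)"
  by (simp add: Rm_def)

lemma Rm_nonzero_imp_Pm_nonzero: "Rm m z \<noteq> 0 \<Longrightarrow> Pm m z \<noteq> 0 \<and> Pm m (- z) \<noteq> 0"
  by (auto simp: Rm_def)

lemma has_field_derivative_Rm:
  assumes "Pm m (- z) \<noteq> 0"
  shows "(Rm m has_field_derivative deriv (Rm m) z) (at z)"
  using holomorphic_derivI[OF Rm_holomorphic open_Pm_minus_nonzero] assms by simp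

lemma deriv_Rm_minus:
  assumes "Rm m w \<noteq> 0"
  shows "deriv (Rm m) (- w) = deriv (Rm m) w / (Rm m w)\<^sup>2"
proof -
  have nz: "Pm m w \<noteq> 0" "Pm m (- w) \<noteq> 0"
    using Rm_nonzero_imp_Pm_nonzero[OF assms] by auto
  have "((\<lambda>z. Rm m (- z)) has_field_derivative deriv (Rm m) (- w) * - 1) (at w)"
    using DERIV_chain2[OF _ DERIV_minus[OF DERIV_ident]] has_field_derivative_Rm[of m "- w"] nz
    by simp
  moreover have "((\<lambda>z. Rm m (- z)) has_field_derivative - (deriv (Rm m) w * inverse (Rm m w ^ 2))) (at w)"
    unfolding Rm_minus using DERIV_inverse_fun[OF has_field_derivative_Rm assms] nz
    by (simp add: numeral_2_eq_2)
  ultimately have "deriv (Rm m) (- w) * - 1 = - (deriv (Rm m) w * inverse (Rm m w ^ 2))"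
    by (rule DERIV_unique)
  then show ?thesis
    by (simp add: divide_inverse)
qed

lemma local_sol_branch_at_0: "local_sol_branch m s c zf \<Longrightarrow> Rm m (zf 0) = s"
  unfolding local_sol_branch_def by force

lemma local_sol_branch_unique:
  assumes "local_sol_branch m s c z1" "local_sol_branch m s c z2"
  shows "eventually (\<lambda>t. z1 t = z2 t) (nhds 0)"
proof -
  obtain \<delta>1 \<epsilon>1 where "\<delta>1 > 0" and H1: "\<And>t. norm t < \<delta>1 \<Longrightarrow> z1 t \<in> ball c \<epsilon>1 \<and> Rm m (z1 t) = s * exp t \<and>
      (\<forall>z\<in>ball c \<epsilon>1. Rm m z = s * exp t \<longrightarrow> z = z1 t)"
    using assms(1) unfolding local_sol_branch_def by blast
  obtain \<delta>2 \<epsilon>2 where "\<delta>2 > 0" and H2: "\<And>t. norm t < \<delta>2 \<Longrightarrow> z2 t \<in> ball c \<epsilon>2 \<and> Rm m (z2 t) = s * exp t \<and>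
      (\<forall>z\<in>ball c \<epsilon>2. Rm m z = s * exp t \<longrightarrow> z = z2 t)"
    using assms(2) unfolding local_sol_branch_def by blast
  have "z1 t = z2 t" if "norm t < min \<delta>1 \<delta>2" for t
  proof (cases "\<epsilon>1 \<le> \<epsilon>2")
    case True
    then have "z1 t \<in> ball c \<epsilon>2"
      using H1[of t] that by auto
    then show ?thesis
      using H1[of t] H2[of t] that by simp
  next
    case False
    then have "z2 t \<in> ball c \<epsilon>1"
      using H2[of t] that by auto
    then show ?thesis
      using H1[of t] H2[of t] that by simp
  qed
  then show ?thesis
    unfolding eventually_nhds_metric using \<open>\<delta>1 > 0\<close> \<open>\<delta>2 > 0\<close>
    by (intro exI[of _ "min \<delta>1 \<delta>2"]) (auto simp: dist_norm)
qed

lemma local_sol_branch_minus: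
  assumes "local_sol_branch m s c zf" "s\<^sup>2 = 1"
  shows "local_sol_branch m s (- c) (\<lambda>t. - zf (- t))"
proof -
  obtain \<delta> \<epsilon> where "\<delta> > 0" "\<epsilon> > 0" and H: "\<And>t. norm t < \<delta> \<Longrightarrow> zf t \<in> ball c \<epsilon> \<and> Rm m (zf t) = s * exp t \<and>
      (\<forall>z\<in>ball c \<epsilon>. Rm m z = s * exp t \<longrightarrow> z = zf t)"
    using assms(1) unfolding local_sol_branch_def by blast
  have "s \<noteq> 0"
    using assms(2) by auto
  then have "inverse (s * exp t) = s * exp (- t)" for t
    using assms(2) by (simp add: exp_minus power2_eq_square field_simps)
  then have sol: "Rm m (- z) = s * exp (- t) \<longleftrightarrow> Rm m z = s * exp t" for z t
    by (metis Rm_minus inverse_inverse_eq)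
  have ball: "- z \<in> ball c \<epsilon> \<longleftrightarrow> z \<in> ball (- c) \<epsilon>" for z
    by (metis dist_minus mem_ball minus_minus)
  have "- zf (- t) \<in> ball (- c) \<epsilon> \<and> Rm m (- zf (- t)) = s * exp t \<and>
      (\<forall>z\<in>ball (- c) \<epsilon>. Rm m z = s * exp t \<longrightarrow> z = - zf (- t))" if "norm t < \<delta>" for t
  proof (intro conjI ballI impI)
    show "- zf (- t) \<in> ball (- c) \<epsilon>" "Rm m (- zf (- t)) = s * exp t"
      using H[of "- t"] that ball[of "- zf (- t)"] sol[of "- zf (- t)" t] by simp_all
    fix z
    assume "z \<in> ball (- c) \<epsilon>" "Rm m z = s * exp t"
    then have "- z = zf (- t)"
      using H[of "- t"] that ball[of z] sol[of z t] by simp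
    then show "z = - zf (- t)"
      by (metis minus_minus)
  qed
  then show ?thesis
    unfolding local_sol_branch_def using \<open>\<delta> > 0\<close> \<open>\<epsilon> > 0\<close> by blast
qed

lemma local_sol_branch_holomorphic:
  assumes "local_sol_branch m s c zf" "s \<noteq> 0"
  obtains V where "open V" "0 \<in> V" "zf holomorphic_on V" "zf ` V \<subseteq> {z. Pm m (- z) \<noteq> 0}"
proof -
  obtain \<delta> \<epsilon> where "\<delta> > 0" and H: "\<And>t. norm t < \<delta> \<Longrightarrow> zf t \<in> ball c \<epsilon> \<and> Rm m (zf t) = s * exp t \<and>
      (\<forall>z\<in>ball c \<epsilon>. Rm m z = s * exp t \<longrightarrow> z = zf t)"
    using assms(1) unfolding local_sol_branch_def by blast
  define A where "A = {z. Pm m (- z) \<noteq> 0}"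
  define L where "L z = Ln (Rm m z / s)" for z
  have R0: "Rm m (zf 0) / s = 1"
    using local_sol_branch_at_0[OF assms(1)] assms(2) by simp
  have "zf 0 \<in> A"
    using Rm_nonzero_imp_Pm_nonzero[of m "zf 0"] R0 unfolding A_def by auto
  have "open A"
    unfolding A_def by (rule open_Pm_minus_nonzero)
  have hol_A: "(\<lambda>z. Rm m z / s) holomorphic_on A"
    unfolding A_def using assms(2) by (intro holomorphic_intros Rm_holomorphic)
  then have cont: "isCont (\<lambda>z. Rm m z / s) (zf 0)"
    using \<open>open A\<close> \<open>zf 0 \<in> A\<close> holomorphic_on_imp_continuous_on continuous_on_eq_continuous_at by blast
  have "L (zf 0) \<in> ball 0 \<delta>"
    unfolding L_def R0 using \<open>\<delta> > 0\<close> by simp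
  moreover have "isCont L (zf 0)"
    unfolding L_def using cont R0 by (intro isCont_Ln') auto
  ultimately obtain S1 where "open S1" "zf 0 \<in> S1" and S1: "\<And>z. z \<in> S1 \<Longrightarrow> L z \<in> ball 0 \<delta>"
    unfolding continuous_at_open by (meson open_ball)
  have "Rm m (zf 0) / s \<in> {w. 0 < Re w}"
    using R0 by simp
  then obtain S2 where "open S2" "zf 0 \<in> S2" and S2: "\<And>z. z \<in> S2 \<Longrightarrow> Rm m z / s \<in> {w. 0 < Re w}"
    using cont open_halfspace_Re_gt[of 0] unfolding continuous_at_open by meson
  define U where "U = S1 \<inter> S2 \<inter> ball c \<epsilon> \<inter> A"
  have "open U"
    unfolding U_def using \<open>open S1\<close> \<open>open S2\<close> \<open>open A\<close> by auto
  have "zf 0 \<in> U"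
    unfolding U_def using \<open>zf 0 \<in> S1\<close> \<open>zf 0 \<in> S2\<close> \<open>zf 0 \<in> A\<close> H[of 0] \<open>\<delta> > 0\<close> by auto
  have zf_L: "zf (L z) = z" if "z \<in> U" for z
  proof -
    have "Rm m z / s \<noteq> 0"
      using S2[of z] that unfolding U_def by auto
    then have "Rm m z = s * exp (L z)"
      unfolding L_def using assms(2) by simp
    then show ?thesis
      using H[of "L z"] S1[of z] that unfolding U_def by auto
  qed
  have "inj_on L U"
    by (rule inj_on_inverseI[of _ zf]) (rule zf_L)
  moreover have "L holomorphic_on U"
    unfolding L_def U_def
    by (intro holomorphic_on_Ln' holomorphic_on_subset[OF hol_A]) (auto simp: complex_nonpos_Reals_iff dest: S2)
  ultimately obtain g where "g holomorphic_on L ` U" and g: "\<And>z. z \<in> U \<Longrightarrow> g (L z) = z"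
    using holomorphic_has_inverse[OF _ \<open>open U\<close>] by metis
  have "zf ` L ` U = U"
    unfolding image_image by (simp add: zf_L cong: image_cong)
  show ?thesis
  proof
    show "open (L ` U)"
      by (rule open_mapping_thm3) fact+
    have "L (zf 0) = 0"
      using R0 unfolding L_def by simp
    then show "0 \<in> L ` U"
      using \<open>zf 0 \<in> U\<close> by (metis rev_image_eqI)
    have "g t = zf t" if "t \<in> L ` U" for t
      using that g zf_L by force
    with \<open>g holomorphic_on L ` U\<close> show "zf holomorphic_on L ` U"
      by (rule holomorphic_transform)
    have "U \<subseteq> A"
      unfolding U_def by blast
    then show "zf ` L ` U \<subseteq> {z. Pm m (- z) \<noteq> 0}"
      unfolding \<open>zf ` L ` U = U\<close> A_def .
  qed
qed

lemma local_sol_branch_deriv_Rm_holomorphic: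
  assumes "local_sol_branch m s c zf" "s \<noteq> 0"
  obtains V where "open V" "0 \<in> V" "(\<lambda>t. deriv (Rm m) (zf t)) holomorphic_on V"
proof -
  obtain V where V: "open V" "0 \<in> V" and "zf holomorphic_on V" "zf ` V \<subseteq> {z. Pm m (- z) \<noteq> 0}"
    using local_sol_branch_holomorphic[OF assms] .
  moreover have "deriv (Rm m) holomorphic_on {z. Pm m (- z) \<noteq> 0}"
    by (rule holomorphic_deriv[OF Rm_holomorphic open_Pm_minus_nonzero])
  ultimately have "(deriv (Rm m) \<circ> zf) holomorphic_on V"
    by (intro holomorphic_on_compose_gen)
  with V show ?thesis
    unfolding o_def by (rule that)
qed

lemma isCont_imp_bigo_1:
  fixes f :: "'a::t2_space \<Rightarrow> 'b::real_normed_field"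
  assumes "isCont f a"
  shows "f \<in> O[at a](\<lambda>_. 1)"
  using assms unfolding isCont_def by (intro bigoI_tendsto[where c = "f a"]) simp_all

lemma field_differentiable_vanishing_imp_bigo:
  fixes f :: "'a::real_normed_field \<Rightarrow> 'a"
  assumes "f field_differentiable (at a)" "f a = 0"
  shows "f \<in> O[at a](\<lambda>x. x - a)"
proof -
  obtain D where "((\<lambda>x. f x / (x - a)) \<longlongrightarrow> D) (at a)"
    using assms unfolding field_differentiable_def has_field_derivative_iff by auto
  then show ?thesis
    by (rule bigoI_tendsto) (simp add: eventually_at_filter)
qed

lemma local_sol_branch_symmetric_deriv_Rm_bigo:
  assumes zp: "local_sol_branch m s c zp" and zm: "local_sol_branch m s (- c) zm" and "s\<^sup>2 = 1"
  shows "(\<lambda>t. deriv (Rm m) (zp t) - deriv (Rm m) (zm t)) \<in> O[at 0](\<lambda>t. t) \<and>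
         (\<lambda>t. deriv (Rm m) (zp t)) \<in> O[at 0](\<lambda>_. 1)"
proof -
  have "s \<noteq> 0"
    using \<open>s\<^sup>2 = 1\<close> by auto
  obtain Vp where "open Vp" "0 \<in> Vp" and hol_p: "(\<lambda>t. deriv (Rm m) (zp t)) holomorphic_on Vp"
    using local_sol_branch_deriv_Rm_holomorphic[OF zp \<open>s \<noteq> 0\<close>] .
  obtain Vm where "open Vm" "0 \<in> Vm" and hol_m: "(\<lambda>t. deriv (Rm m) (zm t)) holomorphic_on Vm"
    using local_sol_branch_deriv_Rm_holomorphic[OF zm \<open>s \<noteq> 0\<close>] .
  have "zm 0 = - zp 0"
    using eventually_nhds_x_imp_x[OF local_sol_branch_unique[OF local_sol_branch_minus[OF zp \<open>s\<^sup>2 = 1\<close>] zm]]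
    by simp
  then have vanish: "deriv (Rm m) (zm 0) = deriv (Rm m) (zp 0)"
    using deriv_Rm_minus[of m "zp 0"] local_sol_branch_at_0[OF zp] \<open>s\<^sup>2 = 1\<close> \<open>s \<noteq> 0\<close> by simp
  have "open (Vp \<inter> Vm)" "0 \<in> Vp \<inter> Vm"
    using \<open>open Vp\<close> \<open>open Vm\<close> \<open>0 \<in> Vp\<close> \<open>0 \<in> Vm\<close> by auto
  moreover have "(\<lambda>t. deriv (Rm m) (zp t) - deriv (Rm m) (zm t)) holomorphic_on Vp \<inter> Vm"
    using holomorphic_on_subset[OF hol_p, of "Vp \<inter> Vm"] holomorphic_on_subset[OF hol_m, of "Vp \<inter> Vm"]
    by (intro holomorphic_on_diff) auto
  ultimately have "(\<lambda>t. deriv (Rm m) (zp t) - deriv (Rm m) (zm t)) field_differentiable (at 0)"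
    by (intro holomorphic_on_imp_differentiable_at)
  from field_differentiable_vanishing_imp_bigo[OF this]
  have "(\<lambda>t. deriv (Rm m) (zp t) - deriv (Rm m) (zm t)) \<in> O[at 0](\<lambda>t. t)"
    using vanish by simp
  moreover have "isCont (\<lambda>t. deriv (Rm m) (zp t)) 0"
    using holomorphic_on_imp_differentiable_at[OF hol_p \<open>open Vp\<close> \<open>0 \<in> Vp\<close>]
    by (rule field_differentiable_imp_continuous_at)
  then have "(\<lambda>t. deriv (Rm m) (zp t)) \<in> O[at 0](\<lambda>_. 1)"
    by (rule isCont_imp_bigo_1)
  ultimately show ?thesis ..
qed

theorem lemma4:
  shows "(\<forall>(m::nat) (r::real) zp zm.
            m \<ge> 3 \<and> r \<noteq> 0 \<and> Pm m (\<i> * of_real r) - Pm m (- (\<i> * of_real r)) = 0 \<and>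
            local_sol_branch m 1 (\<i> * of_real r) zp \<and>
            local_sol_branch m 1 (- (\<i> * of_real r)) zm \<longrightarrow>
            (\<lambda>t. deriv (Rm m) (zp t) - deriv (Rm m) (zm t)) \<in> O[at 0](\<lambda>t. t) \<and>
            (\<lambda>t. deriv (Rm m) (zp t)) \<in> O[at 0](\<lambda>_. 1))
       \<and>
         (\<forall>(m::nat) (r::real) zp zm.
            m \<ge> 2 \<and> r \<noteq> 0 \<and> Pm m (\<i> * of_real r) + Pm m (- (\<i> * of_real r)) = 0 \<and>
            local_sol_branch m (-1) (\<i> * of_real r) zp \<and>
            local_sol_branch m (-1) (- (\<i> * of_real r)) zm \<longrightarrow>
            (\<lambda>t. deriv (Rm m) (zp t) - deriv (Rm m) (zm t)) \<in> O[at 0](\<lambda>t. t) \<and>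
            (\<lambda>t. deriv (Rm m) (zp t)) \<in> O[at 0](\<lambda>_. 1))"
  using local_sol_branch_symmetric_deriv_Rm_bigo[where s = 1, simplified]
    local_sol_branch_symmetric_deriv_Rm_bigo[where s = "-1", simplified]
  by blast

end
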